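(* Let $u_0\in L^\infty(\mathbb{R}^d)\cap\mathrm{BAP}(\mathbb{R}^d)$ and let $u$ be the entropy solution of $\partial_t u+\nabla\cdot\mathbf{f}(u)=\sum_{i,j}\partial^2_{x_ix_j}\mathbf{A}_{ij}(u)$, $u(0,\cdot)=u_0$. Then the set $$\Lambda_u=\{\lambda\in\mathbb{R}^d:\ \mathrm{Me}\big(e^{-2\pi i\lambda\cdot(\cdot)}u(t,\cdot)\big)\neq0\ \text{for some } t\ge0\}$$ is at most countable.
   Context: Standing setting: $\mathbf{f}:\mathbb{R}\to\mathbb{R}^d$ smooth; $\mathbf{A}(u)=(\mathbf{A}_{ij}(u))$ smooth symmetric with derivative $A(u)=(a_{ij}(u))$ nonnegative definite; smooth $\sigma_{ik}$ with $a_{ij}=\sum_k\sigma_{ik}\sigma_{jk}$; $\beta_{ik}(u)=\int^u\sigma_{ik}$; $I_R=\{x:\max_i|x_i|\le R/2\}$. The entropy solution (which exists, is unique, and satisfies $u\in C([0,\infty);\mathrm{BAP}(\mathbb{R}^d))$ for such $u_0$) is the $u\in L^\infty((0,\infty)\times\mathbb{R}^d)$ with: (i) $\sum_i\partial_{x_i}\beta_{ik}(u)\in L^2((0,\infty)\times I_R)$; (ii) chain rule $\sum_i\partial_{x_i}\beta^\psi_{ik}(u)=\psi(u)\sum_i\partial_{x_i}\beta_{ik}(u)$ for $\psi\in C(\mathbb{R})$, $(\beta^\psi_{ik})'=\psi\beta'_{ik}$; (iii) for all convex $C^2$ $\eta$, with $\mathbf{q}'=\eta'\mathbf{f}'$,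 $r'_{ij}=\eta'a_{ij}$, $\partial_t\eta(u)+\nabla\cdot\mathbf{q}(u)-\sum\partial^2_{x_ix_j}r_{ij}(u)\le-\eta''(u)\sum_k(\sum_i\partial_{x_i}\beta_{ik}(u))^2$ in distributions; (iv) $\int_{I_R}|u(t)-u_0|dx\to0$ as $t\to0^+$. $\mathrm{BAP}(\mathbb{R}^d)$: completion of trigonometric polynomials under $N_1(g)=\limsup_{R\to\infty}R^{-d}\int_{I_R}|g|dx$; for $g\in\mathrm{BAP}(\mathbb{R}^d)$, $\mathrm{Me}(g)=\lim_{R\to\infty}R^{-d}\int_{I_R}g\,dx$ (which exists). *)

theory Defs
  imports "HOL-Analysis.Analysis"
begin

fun Cn :: "nat \<Rightarrow> ('a::real_normed_vector \<Rightarrow> 'b::real_normed_vector) \<Rightarrow> bool" where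
  "Cn 0 g = continuous_on UNIV g"
| "Cn (Suc n) g = (\<exists>g'. (\<forall>x. (g has_derivative g' x) (at x)) \<and> (\<forall>h. Cn n (\<lambda>x. g' x h)))"

definition smooth :: "('a::real_normed_vector \<Rightarrow> 'b::real_normed_vector) \<Rightarrow> bool" where
  "smooth g \<longleftrightarrow> (\<forall>n. Cn n g)"

definition cube :: "real \<Rightarrow> (real^'d) set" where
  "cube R = {x. \<forall>i. \<bar>x $ i\<bar> \<le> R / 2}"

definition N1 :: "(real^'d \<Rightarrow> complex) \<Rightarrow> ereal" where
  "N1 g = Limsup at_top (\<lambda>R::real. ereal (inverse (R ^ CARD('d)) *
            (LINT x : cube R | lebesgue. norm (g x))))"

definition trig_poly :: "(real^'d \<Rightarrow> complex) \<Rightarrow> bool" where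
  "trig_poly p \<longleftrightarrow> (\<exists>L c. finite L \<and>
      p = (\<lambda>x. \<Sum>l\<in>L. c l * exp (2 * pi * \<i> * complex_of_real (l \<bullet> x))))"

definition BAP :: "(real^'d \<Rightarrow> complex) set" where
  "BAP = {g. (\<forall>R. set_integrable lebesgue (cube R) g) \<and>
             (\<forall>e>0. \<exists>p. trig_poly p \<and> N1 (\<lambda>x. g x - p x) < ereal e)}"

definition Me :: "(real^'d \<Rightarrow> complex) \<Rightarrow> complex" where
  "Me g = Lim at_top (\<lambda>R::real. inverse (complex_of_real (R ^ CARD('d))) *
            (LINT x : cube R | lebesgue. g x))"

definition dt :: "(real \<times> (real^'d) \<Rightarrow> real) \<Rightarrow> real \<times> (real^'d) \<Rightarrow> real" where
  "dt \<phi> p = deriv (\<lambda>s. \<phi> (fst p + s, snd p)) 0"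

definition dx :: "'d \<Rightarrow> (real \<times> (real^'d) \<Rightarrow> real) \<Rightarrow> real \<times> (real^'d) \<Rightarrow> real" where
  "dx i \<phi> p = deriv (\<lambda>s. \<phi> (fst p, snd p + s *\<^sub>R axis i 1)) 0"

definition test_fun :: "(real \<times> (real^'d) \<Rightarrow> real) \<Rightarrow> bool" where
  "test_fun \<phi> \<longleftrightarrow> smooth \<phi> \<and> compact (closure (support_on UNIV \<phi>)) \<and>
     closure (support_on UNIV \<phi>) \<subseteq> {0<..} \<times> UNIV"

text \<open>
  f: flux, A: diffusion matrix, sig: sigma_{ik}, beta: beta_{ik} (antiderivatives of sigma_{ik}).
  g k stands for the L^2 function sum_i d/dx_i beta_{ik}(u).\<close>
definition entropy_solution ::
  "(real \<Rightarrow> real^'d) \<Rightarrow> (real \<Rightarrow> real^'d^'d) \<Rightarrow> ('d \<Rightarrow> 'k::finite \<Rightarrow> real \<Rightarrow> real) \<Rightarrow>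
   ('d \<Rightarrow> 'k \<Rightarrow> real \<Rightarrow> real) \<Rightarrow> (real^'d \<Rightarrow> real) \<Rightarrow> (real \<Rightarrow> real^'d \<Rightarrow> real) \<Rightarrow> bool" where
  "entropy_solution f A sig beta u0 u \<longleftrightarrow>
     (\<lambda>p. u (fst p) (snd p)) \<in> borel_measurable (lebesgue :: (real \<times> (real^'d)) measure) \<and>
     (\<exists>M. AE p in lebesgue. p \<in> {0<..} \<times> UNIV \<longrightarrow> \<bar>u (fst p) (snd p)\<bar> \<le> M) \<and>
     (\<exists>g :: 'k \<Rightarrow> real \<times> (real^'d) \<Rightarrow> real.
        \<comment> \<open>(i) sum_i d_{x_i} beta_{ik}(u) = g k in distributions, and g k in L^2((0,inf) x I_R)\<close>
        (\<forall>k R. set_integrable lebesgue ({0<..} \<times> cube R) (\<lambda>p. (g k p)\<^sup>2)) \<and>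
        (\<forall>k. g k \<in> borel_measurable lebesgue) \<and>
        (\<forall>k \<phi>. test_fun \<phi> \<longrightarrow>
           (LINT p | lebesgue. g k p * \<phi> p) =
           - (LINT p | lebesgue. (\<Sum>i\<in>UNIV. beta i k (u (fst p) (snd p)) * dx i \<phi> p))) \<and>
        \<comment> \<open>(ii) chain rule\<close>
        (\<forall>\<psi> bpsi. continuous_on UNIV \<psi> \<longrightarrow>
           (\<forall>i k s. (bpsi i k has_real_derivative \<psi> s * sig i k s) (at s)) \<longrightarrow>
           (\<forall>k \<phi>. test_fun \<phi> \<longrightarrow>
              (LINT p | lebesgue. \<psi> (u (fst p) (snd p)) * g k p * \<phi> p) =
              - (LINT p | lebesgue. (\<Sum>i\<in>UNIV. bpsi i k (u (fst p) (snd p)) * dx i \<phi> p)))) \<and>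
        \<comment> \<open>(iii) entropy inequalities\<close>
        (\<forall>\<eta> \<eta>' \<eta>'' q r.
           convex_on UNIV \<eta> \<longrightarrow>
           (\<forall>s. (\<eta> has_real_derivative \<eta>' s) (at s)) \<longrightarrow>
           (\<forall>s. (\<eta>' has_real_derivative \<eta>'' s) (at s)) \<longrightarrow>
           continuous_on UNIV \<eta>'' \<longrightarrow>
           (\<forall>s. (q has_vector_derivative (\<eta>' s *\<^sub>R vector_derivative f (at s))) (at s)) \<longrightarrow>
           (\<forall>i j s. (r i j has_real_derivative (\<eta>' s * (vector_derivative A (at s) $ i $ j))) (at s)) \<longrightarrow>
           (\<forall>\<phi>. test_fun \<phi> \<longrightarrow> (\<forall>p. \<phi> p \<ge> 0) \<longrightarrow>
              (LINT p | lebesgue. \<eta>'' (u (fst p) (snd p)) * (\<Sum>k\<in>UNIV. (g k p)\<^sup>2) * \<phi> p)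
              \<le> (LINT p | lebesgue.
                    \<eta> (u (fst p) (snd p)) * dt \<phi> p
                    + (\<Sum>i\<in>UNIV. q (u (fst p) (snd p)) $ i * dx i \<phi> p)
                    + (\<Sum>i\<in>UNIV. \<Sum>j\<in>UNIV. r i j (u (fst p) (snd p)) * dx i (dx j \<phi>) p))))) \<and>
     \<comment> \<open>(iv) initial datum\<close>
     (\<forall>R. ((\<lambda>t. LINT x : cube R | lebesgue. \<bar>u t x - u0 x\<bar>) \<longlongrightarrow> 0) (at_right 0))"

end

theory Submission
  imports Defs
begin

text \<open>
  Only two properties of u are used: every u(t) is in BAP, and t \<mapsto> u(t) is continuous for N1. Choose trigonometric polynomials approximating u(q) within
  1/(n+1) for every rational q \<ge> 0 and every n, and let S be the countable set of their frequencies.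
  By continuity every u(t) is approximated by these polynomials as well, and for \<lambda> \<notin> S the cube
  averages of exp(-2\<pi>i \<lambda>\<cdot>x) times any of them tend to 0; hence Me(exp(-2\<pi>i \<lambda>\<cdot>x) u(t)) = 0.
  The averages of a character exp(2\<pi>i \<mu>\<cdot>x), \<mu> \<noteq> 0, over the cube I_R are O(1/R): translating
  I_R by half a period 1/(2|\<mu>_i|) in a direction with \<mu>_i \<noteq> 0 flips the sign of the integral,
  but changes the domain only by two slabs of volume R^(d-1)/(2|\<mu>_i|).
\<close>

lemma cube_eq_cbox: "cube R = cbox (\<chi> _. - (R/2)) (\<chi> _. R/2 :: real^'d)"
  unfolding cube_def set_eq_iff mem_box_cart mem_Collect_eq vec_lambda_beta
  by (meson abs_le_iff minus_le_iff)

lemma measure_cbox_cart_slab: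
  fixes a b :: "real^'d"
  assumes "\<And>j. j \<noteq> i \<Longrightarrow> b $ j - a $ j = R" "b $ i - a $ i = h" "0 \<le> h" "0 \<le> R"
  shows "measure lborel (cbox a b) = h * R ^ (CARD('d) - 1)"
proof -
  have "a $ j \<le> b $ j" for j
    using assms by (cases "j = i") force+
  then have "cbox a b \<noteq> {}"
    by (simp add: interval_ne_empty_cart)
  then have "measure lborel (cbox a b) = (b$i - a$i) * (\<Prod>j\<in>UNIV-{i}. b$j - a$j)"
    by (simp add: content_cbox_cart prod.remove)
  also have "(\<Prod>j\<in>UNIV-{i}. b$j - a$j) = R ^ (CARD('d) - 1)"
    using assms(1) by (simp add: card_Diff_singleton)
  finally show ?thesis using assms by simp
qed

lemma norm_integral_cube_sub_translate_le:
  fixes f :: "real^'d \<Rightarrow> 'a::banach"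
  assumes f_int: "\<And>a b. f integrable_on cbox a b" and f_le: "\<And>x. norm (f x) \<le> 1"
    and h: "0 \<le> h" "h \<le> R"
  shows "norm (integral (cube R) f - integral (cube R) (\<lambda>x. f (x + h *\<^sub>R axis i 1)))
           \<le> 2 * h * R ^ (CARD('d) - 1)"
proof -
  define a b :: "real^'d" where "a = (\<chi> _. - (R/2))" and "b = (\<chi> _. R/2)"
  define v :: "real^'d" where "v = h *\<^sub>R axis i 1"
  define c where "c = h - R/2"
  define slab1 where "slab1 = cbox a (\<chi> j. if j = i then c else R/2)"
  define slab2 where "slab2 = cbox (\<chi> j. if j = i then R/2 else - (R/2)) (b + v)"
  have split: "integral (cbox p q) f = integral (cbox p q \<inter> {x. x $ i \<le> t}) f
      + integral (cbox p q \<inter> {x. x $ i \<ge> t}) f" for p q :: "real^'d" and t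
    using integral_split[OF f_int, of "axis i 1"] by (simp add: cart_eq_inner_axis)
  \<comment> \<open>The cube and its translate share \<open>cbox (a + v) b\<close> and differ by \<open>slab1\<close> and \<open>slab2\<close>.\<close>
  have "(\<chi> j. if j = i then min (b$i) c else b$j) = (\<chi> j. if j = i then c else R/2)"
    "(\<chi> j. if j = i then max (a$i) c else a$j) = a + v"
    "(\<chi> j. if j = i then min ((b + v)$i) (R/2) else (b + v)$j) = b"
    "(\<chi> j. if j = i then max ((a + v)$i) (R/2) else (a + v)$j) = (\<chi> j. if j = i then R/2 else - (R/2))"
    using h by (auto simp: vec_eq_iff a_def b_def c_def v_def axis_def)
  then have "cbox a b \<inter> {x. x $ i \<le> c} = slab1" "cbox a b \<inter> {x. x $ i \<ge> c} = cbox (a + v) b"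
    "cbox (a + v) (b + v) \<inter> {x. x $ i \<le> R/2} = cbox (a + v) b"
    "cbox (a + v) (b + v) \<inter> {x. x $ i \<ge> R/2} = slab2"
    unfolding interval_split_cart[unfolded interval_cbox_cart] slab1_def slab2_def by simp_all
  with split[of a b c] split[of "a + v" "b + v" "R/2"]
  have "integral (cbox a b) f - integral (cbox (a + v) (b + v)) f
      = integral slab1 f - integral slab2 f"
    by simp
  moreover have "norm (integral (cbox p q) f) \<le> h * R ^ (CARD('d) - 1)"
    if "\<And>j. j \<noteq> i \<Longrightarrow> q $ j - p $ j = R" "q $ i - p $ i = h" for p q
    using has_integral_bound[OF zero_le_one integrable_integral[OF f_int] f_le, of p q]
      measure_cbox_cart_slab[OF that h(1) order_trans[OF h]] by simp
  then have "norm (integral slab1 f) \<le> h * R ^ (CARD('d) - 1)"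
    "norm (integral slab2 f) \<le> h * R ^ (CARD('d) - 1)"
    unfolding slab1_def slab2_def by (simp_all add: a_def b_def c_def v_def axis_def)
  moreover have "integral (cube R) (\<lambda>x. f (x + v)) = integral (cbox (a + v) (b + v)) f"
    using integral_shift_cbox_plus[of a b f v] by (simp add: cube_eq_cbox a_def b_def o_def add.commute)
  ultimately show ?thesis
    using norm_triangle_ineq4[of "integral slab1 f" "integral slab2 f"]
    by (simp add: cube_eq_cbox a_def b_def v_def)
qed

definition character :: "real^'d \<Rightarrow> real^'d \<Rightarrow> complex" where
  "character \<mu> x = exp (2 * pi * \<i> * complex_of_real (\<mu> \<bullet> x))"

lemma norm_character [simp]: "norm (character \<mu> x) = 1"
  by (simp add: character_def norm_exp_eq_Re)

lemma continuous_on_character [continuous_intros]: "continuous_on S (character \<mu>)"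
  unfolding character_def by (intro continuous_intros)

lemma character_mult: "character \<mu> x * character \<nu> x = character (\<mu> + \<nu>) x"
  by (simp add: character_def inner_add_left distrib_left exp_add)

lemma character_uminus: "character (- \<mu>) x = exp (- 2 * pi * \<i> * complex_of_real (\<mu> \<bullet> x))"
  by (simp add: character_def)

lemma character_translate_half_period:
  assumes "\<mu> $ i \<noteq> 0"
  shows "character \<mu> (x + (1 / (2 * \<bar>\<mu> $ i\<bar>)) *\<^sub>R axis i 1) = - character \<mu> x"
proof -
  have "2 * pi * \<i> * complex_of_real (1 / (2 * \<bar>\<mu> $ i\<bar>) * \<mu> $ i)
      = (if \<mu> $ i > 0 then pi * \<i> else - (pi * \<i>))"
    using assms by (auto simp: field_simps)
  then show ?thesis
    by (auto simp: character_def inner_add_right inner_axis distrib_left exp_add exp_minus)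
qed

lemma norm_integral_cube_character_le:
  fixes \<mu> :: "real^'d"
  assumes "\<mu> $ i \<noteq> 0" and "1 / (2 * \<bar>\<mu> $ i\<bar>) \<le> R"
  shows "norm (integral (cube R) (character \<mu>)) \<le> R ^ (CARD('d) - 1) / (2 * \<bar>\<mu> $ i\<bar>)"
proof -
  define h where "h = 1 / (2 * \<bar>\<mu> $ i\<bar>)"
  have "norm (integral (cube R) (character \<mu>) - integral (cube R) (\<lambda>x. - character \<mu> x))
      \<le> 2 * h * R ^ (CARD('d) - 1)"
    using norm_integral_cube_sub_translate_le[of "character \<mu>" h R i] assms
    by (simp add: h_def character_translate_half_period integrable_continuous continuous_on_character)
  then show ?thesis
    by (simp add: h_def)
qed

definition cube_mean :: "real \<Rightarrow> (real^'d \<Rightarrow> 'a::{banach,second_countable_topology}) \<Rightarrow> 'a" where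
  "cube_mean R g = inverse (R ^ CARD('d)) *\<^sub>R (LINT x : cube R | lebesgue. g x)"

lemma Me_eqI:
  fixes g :: "real^'d \<Rightarrow> complex"
  assumes "((\<lambda>R. cube_mean R g) \<longlongrightarrow> l) at_top"
  shows "Me g = l"
  using tendsto_Lim[OF trivial_limit_at_top_linorder assms]
  by (simp add: Me_def cube_mean_def scaleR_conv_of_real)

lemma N1_minus_commute: "N1 (\<lambda>x. g x - h x) = N1 (\<lambda>x. h x - g x)"
  by (simp add: N1_def norm_minus_commute)

lemma eventually_cube_mean_norm_less:
  fixes g :: "real^'d \<Rightarrow> complex"
  assumes "N1 g < ereal e"
  shows "\<forall>\<^sub>F R in at_top. cube_mean R (\<lambda>x. norm (g x)) < e"
proof -
  have "Limsup at_top (\<lambda>R. ereal (cube_mean R (\<lambda>x. norm (g x)))) < ereal e"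
    using assms by (simp add: N1_def cube_mean_def)
  from Limsup_lessD[OF this] show ?thesis
    by (rule eventually_mono) simp
qed

lemma set_integrable_cube_continuous:
  fixes g :: "real^'d \<Rightarrow> 'a::euclidean_space"
  assumes "continuous_on UNIV g"
  shows "set_integrable lebesgue (cube R) g"
  unfolding cube_eq_cbox absolutely_integrable_on_def[symmetric]
  by (rule absolutely_integrable_continuous) (rule continuous_on_subset[OF assms], simp)

lemma cube_mean_continuous:
  fixes g :: "real^'d \<Rightarrow> 'a::euclidean_space"
  assumes "continuous_on UNIV g"
  shows "cube_mean R g = inverse (R ^ CARD('d)) *\<^sub>R integral (cube R) g"
  unfolding cube_mean_def
  by (simp add: set_lebesgue_integral_eq_integral(2)[OF set_integrable_cube_continuous[OF assms]])

lemma cube_mean_character_tendsto_0: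
  fixes \<mu> :: "real^'d"
  assumes "\<mu> \<noteq> 0"
  shows "((\<lambda>R. cube_mean R (character \<mu>)) \<longlongrightarrow> 0) at_top"
proof -
  obtain i where i: "\<mu> $ i \<noteq> 0"
    using assms by (metis vec_eq_iff zero_index)
  define h where "h = 1 / (2 * \<bar>\<mu> $ i\<bar>)"
  show ?thesis
  proof (rule Lim_null_comparison)
    show "((\<lambda>R. h / R) \<longlongrightarrow> 0) at_top"
      by (intro tendsto_divide_0[OF tendsto_const] filterlim_at_top_imp_at_infinity filterlim_ident)
    show "\<forall>\<^sub>F R in at_top. norm (cube_mean R (character \<mu>)) \<le> h / R"
      using eventually_ge_at_top[of "max h 1"]
    proof eventually_elim
      case (elim R)
      then have R: "R > 0" "h \<le> R" by auto
      have "norm (cube_mean R (character \<mu>)) = norm (integral (cube R) (character \<mu>)) / R ^ CARD('d)"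
        using R by (simp add: cube_mean_continuous continuous_on_character divide_inverse_commute)
      also have "\<dots> \<le> h * R ^ (CARD('d) - 1) / R ^ CARD('d)"
        using norm_integral_cube_character_le[OF i, of R] R by (intro divide_right_mono) (auto simp: h_def)
      also have "\<dots> = h / R"
        using R by (simp add: power_eq_if[of R "CARD('d)"])
      finally show ?case .
    qed
  qed
qed

lemma norm_cube_mean_le:
  fixes g :: "real^'d \<Rightarrow> 'a::{banach,second_countable_topology}"
  assumes "set_integrable lebesgue (cube R) g" and "R > 0"
  shows "norm (cube_mean R g) \<le> cube_mean R (\<lambda>x. norm (g x))"
  using set_integral_norm_bound[OF assms(1)] assms(2) by (simp add: cube_mean_def)

lemma cube_mean_diff:
  fixes g h :: "real^'d \<Rightarrow> 'a::{banach,second_countable_topology}"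
  assumes "set_integrable lebesgue (cube R) g" and "set_integrable lebesgue (cube R) h"
  shows "cube_mean R (\<lambda>x. g x - h x) = cube_mean R g - cube_mean R h"
  using assms by (simp add: cube_mean_def scaleR_diff_right)

lemma cube_mean_norm_diff_triangle:
  fixes g h k :: "real^'d \<Rightarrow> 'a::{banach,second_countable_topology}"
  assumes "set_integrable lebesgue (cube R) g" "set_integrable lebesgue (cube R) h"
    "set_integrable lebesgue (cube R) k" and "R > 0"
  shows "cube_mean R (\<lambda>x. norm (g x - k x))
           \<le> cube_mean R (\<lambda>x. norm (g x - h x)) + cube_mean R (\<lambda>x. norm (h x - k x))"
proof -
  have "set_integrable lebesgue (cube R) (\<lambda>x. norm (p x - q x))"
    if "set_integrable lebesgue (cube R) p" "set_integrable lebesgue (cube R) q"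
    for p q :: "real^'d \<Rightarrow> 'a"
    by (intro set_integrable_norm set_integral_diff(1) that)
  note integrable = this[OF assms(1,2)] this[OF assms(2,3)] this[OF assms(1,3)]
  have "(LINT x : cube R | lebesgue. norm (g x - k x))
      \<le> (LINT x : cube R | lebesgue. norm (g x - h x) + norm (h x - k x))"
    by (rule set_integral_mono[OF integrable(3) set_integral_add(1)[OF integrable(1,2)]])
      (rule norm_diff_triangle_le[OF order_refl order_refl])
  then have "(LINT x : cube R | lebesgue. norm (g x - k x))
      \<le> (LINT x : cube R | lebesgue. norm (g x - h x)) + (LINT x : cube R | lebesgue. norm (h x - k x))"
    by (simp add: set_integral_add(2)[OF integrable(1,2)])
  then show ?thesis
    using assms(4) by (simp add: cube_mean_def flip: distrib_left)
qed

lemma eventually_cube_mean_norm_diff_less: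
  fixes g h k :: "real^'d \<Rightarrow> complex"
  assumes "\<And>R. set_integrable lebesgue (cube R) g" "\<And>R. set_integrable lebesgue (cube R) h"
    "\<And>R. set_integrable lebesgue (cube R) k"
    and "N1 (\<lambda>x. g x - h x) < ereal e\<^sub>1" "N1 (\<lambda>x. h x - k x) < ereal e\<^sub>2"
  shows "\<forall>\<^sub>F R in at_top. cube_mean R (\<lambda>x. norm (g x - k x)) < e\<^sub>1 + e\<^sub>2"
  using eventually_cube_mean_norm_less[OF assms(4)] eventually_cube_mean_norm_less[OF assms(5)]
    eventually_gt_at_top[of 0]
proof eventually_elim
  case (elim R)
  then show ?case
    using cube_mean_norm_diff_triangle[OF assms(1-3)] by fastforce
qed

lemma set_integrable_character_mult:
  fixes g :: "real^'d \<Rightarrow> complex"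
  assumes "set_integrable lebesgue S g"
  shows "set_integrable lebesgue S (\<lambda>x. character \<mu> x * g x)"
proof (rule set_integrable_bound[OF assms])
  have "character \<mu> \<in> borel_measurable lebesgue"
    using continuous_imp_measurable_on_sets_lebesgue[of UNIV "character \<mu>"]
    by (simp add: continuous_on_character)
  moreover have "(\<lambda>x. indicator S x *\<^sub>R g x) \<in> borel_measurable lebesgue"
    using assms unfolding set_integrable_def by (rule borel_measurable_integrable)
  ultimately have "(\<lambda>x. character \<mu> x * (indicator S x *\<^sub>R g x)) \<in> borel_measurable lebesgue"
    by (rule borel_measurable_times)
  then show "set_borel_measurable lebesgue S (\<lambda>x. character \<mu> x * g x)"
    unfolding set_borel_measurable_def by (simp add: mult_scaleR_right)
  show "AE x in lebesgue. x \<in> S \<longrightarrow> norm (character \<mu> x * g x) \<le> norm (g x)"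
    by (simp add: norm_mult)
qed

definition trig_sum :: "(real^'d) set \<Rightarrow> (real^'d \<Rightarrow> complex) \<Rightarrow> real^'d \<Rightarrow> complex" where
  "trig_sum L c x = (\<Sum>l\<in>L. c l * character l x)"

lemma trig_poly_iff_trig_sum: "trig_poly p \<longleftrightarrow> (\<exists>L c. finite L \<and> p = trig_sum L c)"
  by (simp add: trig_poly_def trig_sum_def character_def fun_eq_iff)

lemma continuous_on_trig_sum [continuous_intros]: "continuous_on S (trig_sum L c)"
  unfolding trig_sum_def by (intro continuous_intros)

lemma cube_mean_character_mult_trig_sum_tendsto_0:
  fixes lam :: "real^'d"
  assumes "finite L" and "lam \<notin> L"
  shows "((\<lambda>R. cube_mean R (\<lambda>x. character (- lam) x * trig_sum L c x)) \<longlongrightarrow> 0) at_top"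
proof -
  have "cube_mean R (\<lambda>x. character (- lam) x * trig_sum L c x)
      = (\<Sum>l\<in>L. c l * cube_mean R (character (l - lam)))" for R
  proof -
    have "(\<lambda>x. character (- lam) x * trig_sum L c x) = (\<lambda>x. \<Sum>l\<in>L. c l * character (l - lam) x)"
      by (simp add: trig_sum_def sum_distrib_left character_mult mult.left_commute)
    moreover have "integral (cube R) (\<lambda>x. \<Sum>l\<in>L. c l * character (l - lam) x)
        = (\<Sum>l\<in>L. c l * integral (cube R) (character (l - lam)))"
      by (subst integral_sum)
        (auto simp: assms(1) cube_eq_cbox intro!: integrable_continuous continuous_intros)
    ultimately show ?thesis
      by (simp add: cube_mean_continuous continuous_intros scaleR_sum_right)
  qed
  moreover have "((\<lambda>R. \<Sum>l\<in>L. c l * cube_mean R (character (l - lam)))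
      \<longlongrightarrow> (\<Sum>l\<in>L. c l * 0)) at_top"
    using assms(2) by (intro tendsto_sum tendsto_mult tendsto_const cube_mean_character_tendsto_0) auto
  ultimately show ?thesis
    by simp
qed

lemma cube_mean_character_mult_tendsto_0:
  fixes g :: "real^'d \<Rightarrow> complex" and lam :: "real^'d"
  assumes g_int: "\<And>R. set_integrable lebesgue (cube R) g"
    and approx: "\<And>e. e > 0 \<Longrightarrow> \<exists>L c. finite L \<and> lam \<notin> L \<and>
                   (\<forall>\<^sub>F R in at_top. cube_mean R (\<lambda>x. norm (g x - trig_sum L c x)) < e)"
  shows "((\<lambda>R. cube_mean R (\<lambda>x. character (- lam) x * g x)) \<longlongrightarrow> 0) at_top"
proof (rule tendstoI)
  fix e :: real
  assume "e > 0"
  then obtain L c where L: "finite L" "lam \<notin> L"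
    and close: "\<forall>\<^sub>F R in at_top. cube_mean R (\<lambda>x. norm (g x - trig_sum L c x)) < e/2"
    using approx[of "e/2"] by auto
  define p where "p = trig_sum L c"
  have p_int: "set_integrable lebesgue (cube R) p" for R
    unfolding p_def by (intro set_integrable_cube_continuous continuous_intros)
  have "\<forall>\<^sub>F R in at_top. norm (cube_mean R (\<lambda>x. character (- lam) x * p x)) < e/2"
    using tendstoD[OF cube_mean_character_mult_trig_sum_tendsto_0[OF L] half_gt_zero[OF \<open>e > 0\<close>]]
    by (simp add: p_def)
  with close eventually_gt_at_top[of 0]
  show "\<forall>\<^sub>F R in at_top. dist (cube_mean R (\<lambda>x. character (- lam) x * g x)) 0 < e"
  proof eventually_elim
    case (elim R)
    let ?\<chi> = "character (- lam)"
    have "cube_mean R (\<lambda>x. ?\<chi> x * g x)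
        = cube_mean R (\<lambda>x. ?\<chi> x * (g x - p x)) + cube_mean R (\<lambda>x. ?\<chi> x * p x)"
      using cube_mean_diff[OF set_integrable_character_mult[OF g_int] set_integrable_character_mult[OF p_int]]
      by (simp add: right_diff_distrib)
    moreover have "norm (cube_mean R (\<lambda>x. ?\<chi> x * (g x - p x))) \<le> cube_mean R (\<lambda>x. norm (g x - p x))"
      using norm_cube_mean_le[OF set_integrable_character_mult[OF set_integral_diff(1)[OF g_int p_int]]
          \<open>R > 0\<close>]
      by (simp add: norm_mult)
    ultimately show ?case
      using elim norm_triangle_ineq[of "cube_mean R (\<lambda>x. ?\<chi> x * (g x - p x))"
          "cube_mean R (\<lambda>x. ?\<chi> x * p x)"]
      by (simp add: p_def)
  qed
qed

lemma countable_joint_spectrum: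
  fixes U :: "real \<Rightarrow> real^'d \<Rightarrow> complex"
  assumes U_BAP: "\<And>t. t \<ge> 0 \<Longrightarrow> U t \<in> BAP"
    and U_cont: "\<And>t e. t \<ge> 0 \<Longrightarrow> e > 0 \<Longrightarrow> \<exists>\<delta>>0. \<forall>s\<ge>0. \<bar>s - t\<bar> < \<delta> \<longrightarrow>
                   N1 (\<lambda>x. U s x - U t x) < ereal e"
  shows "countable {lam. \<exists>t\<ge>0. Me (\<lambda>x. character (- lam) x * U t x) \<noteq> 0}"
proof -
  have U_int: "set_integrable lebesgue (cube R) (U t)" if "t \<ge> 0" for t R
    using U_BAP[OF that] by (simp add: BAP_def)
  have U_approx: "\<exists>L c. finite L \<and> N1 (\<lambda>x. U t x - trig_sum L c x) < ereal e"
    if "t \<ge> 0" "e > 0" for t e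
    using U_BAP[OF that(1)] that(2) unfolding BAP_def trig_poly_iff_trig_sum by blast
  have "\<forall>t n. \<exists>L c. t \<ge> 0 \<longrightarrow>
      finite L \<and> N1 (\<lambda>x. U t x - trig_sum L c x) < ereal (1 / Suc n)"
    using U_approx by simp
  then obtain L c where L_fin: "\<And>t n. t \<ge> 0 \<Longrightarrow> finite (L t n)"
    and L_approx: "\<And>t n. t \<ge> 0 \<Longrightarrow>
      N1 (\<lambda>x. U t x - trig_sum (L t n) (c t n) x) < ereal (1 / Suc n)"
    by metis
  define S where "S = (\<Union>t\<in>\<rat> \<inter> {0..}. \<Union>n. L t n)"
  have S: "countable S"
    unfolding S_def using L_fin
    by (intro countable_UN[OF countable_subset[OF Int_lower1 countable_rat]]
        countable_UN[OF countableI_type] countable_finite) auto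
  have "Me (\<lambda>x. character (- lam) x * U t x) = 0" if "t \<ge> 0" "lam \<notin> S" for t lam
  proof (intro Me_eqI cube_mean_character_mult_tendsto_0 U_int[OF \<open>t \<ge> 0\<close>])
    fix e :: real
    assume "e > 0"
    then obtain \<delta> where "\<delta> > 0"
      and \<delta>: "\<And>s. s \<ge> 0 \<Longrightarrow> \<bar>s - t\<bar> < \<delta> \<Longrightarrow> N1 (\<lambda>x. U s x - U t x) < ereal (e/2)"
      using U_cont[OF \<open>t \<ge> 0\<close>, of "e/2"] by auto
    then obtain q where q: "q \<in> \<rat>" "t < q" "q < t + \<delta>"
      using Rats_dense_in_real[of t "t + \<delta>"] by auto
    with \<open>t \<ge> 0\<close> have "q \<ge> 0" and q_close: "\<bar>q - t\<bar> < \<delta>" by auto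
    obtain n where n: "1 / Suc n < e/2"
      using reals_Archimedean[of "e/2"] \<open>e > 0\<close> by (auto simp: inverse_eq_divide)
    have "N1 (\<lambda>x. U t x - U q x) < ereal (e/2)"
      using \<delta>[OF \<open>q \<ge> 0\<close> q_close] N1_minus_commute by metis
    moreover have "N1 (\<lambda>x. U q x - trig_sum (L q n) (c q n) x) < ereal (e/2)"
      using L_approx[OF \<open>q \<ge> 0\<close>, of n] n less_trans[of _ "ereal (1 / Suc n)"] by simp
    ultimately have "\<forall>\<^sub>F R in at_top. cube_mean R (\<lambda>x. norm (U t x - trig_sum (L q n) (c q n) x)) < e"
      using eventually_cube_mean_norm_diff_less[OF U_int[OF \<open>t \<ge> 0\<close>] U_int[OF \<open>q \<ge> 0\<close>]
          set_integrable_cube_continuous[OF continuous_on_trig_sum]] by fastforce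
    moreover have "lam \<notin> L q n"
      using \<open>lam \<notin> S\<close> q \<open>q \<ge> 0\<close> by (auto simp: S_def)
    ultimately show "\<exists>L c. finite L \<and> lam \<notin> L \<and>
        (\<forall>\<^sub>F R in at_top. cube_mean R (\<lambda>x. norm (U t x - trig_sum L c x)) < e)"
      using L_fin[OF \<open>q \<ge> 0\<close>] by blast
  qed
  then have "{lam. \<exists>t\<ge>0. Me (\<lambda>x. character (- lam) x * U t x) \<noteq> 0} \<subseteq> S"
    by blast
  then show ?thesis
    using S by (rule countable_subset)
qed

theorem lemma2p6:
  fixes f :: "real \<Rightarrow> real^'d"
    and A :: "real \<Rightarrow> real^'d^'d"
    and sig beta :: "'d \<Rightarrow> 'k::finite \<Rightarrow> real \<Rightarrow> real"
    and u0 :: "real^'d \<Rightarrow> real"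
    and u :: "real \<Rightarrow> real^'d \<Rightarrow> real"
  assumes f_smooth: "smooth f"
    and A_smooth: "smooth A"
    and A_sym: "\<And>s i j. A s $ i $ j = A s $ j $ i"
    and A_deriv_nonneg: "\<And>s \<xi>. 0 \<le> (\<Sum>i\<in>UNIV. \<Sum>j\<in>UNIV. vector_derivative A (at s) $ i $ j * \<xi> $ i * \<xi> $ j)"
    and sig_smooth: "\<And>i k. smooth (sig i k)"
    and a_eq: "\<And>s i j. vector_derivative A (at s) $ i $ j = (\<Sum>k\<in>UNIV. sig i k s * sig j k s)"
    and beta_deriv: "\<And>i k s. (beta i k has_real_derivative sig i k s) (at s)"
    and u0_meas: "u0 \<in> borel_measurable lebesgue"
    and u0_bdd: "\<exists>M. AE x in lebesgue. \<bar>u0 x\<bar> \<le> M"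
    and u0_BAP: "(\<lambda>x. complex_of_real (u0 x)) \<in> BAP"
    and u_entropy: "entropy_solution f A sig beta u0 u"
    and u_BAP: "\<And>t. t \<ge> 0 \<Longrightarrow> (\<lambda>x. complex_of_real (u t x)) \<in> BAP"
    and u_cont: "\<And>t e. t \<ge> 0 \<Longrightarrow> e > 0 \<Longrightarrow> \<exists>\<delta>>0. \<forall>s\<ge>0. \<bar>s - t\<bar> < \<delta> \<longrightarrow>
                   N1 (\<lambda>x. complex_of_real (u s x - u t x)) < ereal e"
  shows "countable {lam::real^'d. \<exists>t\<ge>0.
           Me (\<lambda>x. exp (- 2 * pi * \<i> * complex_of_real (lam \<bullet> x)) * complex_of_real (u t x)) \<noteq> 0}"
proof -
  have "countable {lam. \<exists>t\<ge>0.
      Me (\<lambda>x. character (- lam) x * complex_of_real (u t x)) \<noteq> 0}"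
    by (rule countable_joint_spectrum) (use u_BAP u_cont in \<open>simp_all flip: of_real_diff\<close>)
  then show ?thesis
    by (simp add: character_uminus)
qed

end
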